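(* For every finite simple graph $G$, $$\vartheta(G)\;=\;\alpha_{\mathcal S}(G)\;=\;\inf_A\ \min\Big\{W_A(x)\ \Big|\ x\in\big[\lambda_{\min}(A)^{-1},\lambda_{\max}(A)^{-1}\big]\Big\},$$ where in the rightmost expression $A$ ranges over all real symmetric weighted adjacency matrices of $G$.
   Context: $G$ is a finite simple graph (undirected, no loops) with vertex set $\{1,\dots,n\}$. A (real symmetric) weighted adjacency matrix of $G$ is a real symmetric $n\times n$ matrix $A$ with $A_{ij}=0$ whenever $i\neq j$ are non-adjacent and $A_{ii}=0$ for all $i$. $\boldsymbol 1$ is the all-ones vector, $J=\boldsymbol 1\boldsymbol 1^T$, $\langle\cdot,\cdot\rangle$ the standard inner product. $\vartheta(G)$ is the Lovász theta function, which may be taken as $\vartheta(G)=\inf_B\lambda_{\max}(B)$ over real symmetric $B$ with $B_{ij}=1$ whenever $i=j$ or $i,j$ are non-adjacent. Let $\mathcal S_n=\{\boldsymbol v\in\mathbb R^n: \langle \boldsymbol 1,\boldsymbol v\rangle=|\boldsymbol v|^2\}=\{\boldsymbol v: |\boldsymbol v-\tfrac12\boldsymbol 1|^2=n/4\}$. The spherical independence number is $\alpha_{\mathcal S}(G)=\inf_A\sup\{|\boldsymbol v|^2:\boldsymbol v\in\mathcal S_n,\ \langle \boldsymbol v,A\boldsymbol v\rangle=0\}$, with $A$ over real symmetric weighted adjacency matrices of $G$. For such $A$ with spectral decomposition $A=\sum_{\lambda\in\sigma(A)}\lambda P_\lambda$ ($P_\lambda$ the orthogonal projection onto the $\lambda$-eigenspace),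 the weighted walk-generating function is $W_A(x)=\langle\boldsymbol 1,(I-xA)^{-1}\boldsymbol 1\rangle=\sum_{\lambda\in\sigma(A)}\frac{\langle\boldsymbol 1,P_\lambda\boldsymbol 1\rangle}{1-\lambda x}$; terms with $\langle\boldsymbol 1,P_\lambda\boldsymbol 1\rangle=0$ are omitted, so that $W_A(\lambda^{-1})$ is defined in that case, and at an endpoint $x=\lambda^{-1}$ with $\langle\boldsymbol 1,P_\lambda\boldsymbol 1\rangle>0$ the value is $+\infty$. $\lambda_{\min}(A),\lambda_{\max}(A)$ are the smallest and largest eigenvalues of $A$ (strictly negative and positive when $A\ne0$); when $A=0$ the inner minimum is taken to equal $n$ (interpreting the interval as $(-\infty,+\infty)$). *)

theory Defs
  imports "HOL-Analysis.Analysis"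
begin

text \<open>Graphs on a finite vertex type 'n (vertex set of size n = CARD('n)),
  given by an adjacency relation E (assumed symmetric and irreflexive in the theorem).\<close>

definition ones :: "real ^ 'n" where
  "ones = (\<chi> i. 1)"

definition symmetric_mat :: "real ^'n ^'n \<Rightarrow> bool" where
  "symmetric_mat A \<longleftrightarrow> transpose A = A"

definition weighted_adj :: "('n::finite \<Rightarrow> 'n \<Rightarrow> bool) \<Rightarrow> real ^'n ^'n \<Rightarrow> bool" where
  "weighted_adj E A \<longleftrightarrow> symmetric_mat A \<and> (\<forall>i. A $ i $ i = 0) \<and>
     (\<forall>i j. i \<noteq> j \<and> \<not> E i j \<longrightarrow> A $ i $ j = 0)"

definition eigenvalues :: "real ^'n ^'n \<Rightarrow> real set" where
  "eigenvalues A = {c. \<exists>v. v \<noteq> 0 \<and> A *v v = c *\<^sub>R v}"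

definition eigenspace :: "real ^'n ^'n \<Rightarrow> real \<Rightarrow> (real ^'n) set" where
  "eigenspace A c = {v. A *v v = c *\<^sub>R v}"

definition lambda_max :: "real ^'n ^'n \<Rightarrow> real" where
  "lambda_max A = Max (eigenvalues A)"

definition lambda_min :: "real ^'n ^'n \<Rightarrow> real" where
  "lambda_min A = Min (eigenvalues A)"

definition orth_proj :: "(real ^'n) set \<Rightarrow> real ^'n \<Rightarrow> real ^'n" where
  "orth_proj S v = (THE p. p \<in> S \<and> (\<forall>w\<in>S. (v - p) \<bullet> w = 0))"

definition spec_weight :: "real ^'n ^'n \<Rightarrow> real \<Rightarrow> real" where
  "spec_weight A c = ones \<bullet> orth_proj (eigenspace A c) ones"

definition lovasz_theta :: "('n::finite \<Rightarrow> 'n \<Rightarrow> bool) \<Rightarrow> real" where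
  "lovasz_theta E = Inf {lambda_max B | B. symmetric_mat B \<and>
      (\<forall>i j. (i = j \<or> \<not> E i j) \<longrightarrow> B $ i $ j = 1)}"

definition sphere_S :: "(real ^'n) set" where
  "sphere_S = {v. ones \<bullet> v = (norm v)\<^sup>2}"

definition spherical_indep :: "('n::finite \<Rightarrow> 'n \<Rightarrow> bool) \<Rightarrow> real" where
  "spherical_indep E = Inf {Sup {(norm v)\<^sup>2 | v. v \<in> sphere_S \<and> v \<bullet> (A *v v) = 0} | A.
      weighted_adj E A}"

definition walk_gen :: "real ^'n ^'n \<Rightarrow> real \<Rightarrow> ereal" where
  "walk_gen A x =
     (if \<exists>c\<in>eigenvalues A. spec_weight A c > 0 \<and> c * x = 1 then \<infinity>
      else ereal (\<Sum>c\<in>{c\<in>eigenvalues A. spec_weight A c \<noteq> 0}.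
                     spec_weight A c / (1 - c * x)))"

definition inner_min :: "real ^'n ^'n \<Rightarrow> ereal" where
  "inner_min A =
     (if A = 0 then ereal (real CARD('n))
      else (INF x\<in>{1 / lambda_min A .. 1 / lambda_max A}. walk_gen A x))"

end

theory Submission
  imports Defs
begin

text \<open>
  For a weighted adjacency matrix \<open>A\<close> and \<open>x\<close> between \<open>1/\<lambda>\<^sub>m\<^sub>i\<^sub>n\<close> and \<open>1/\<lambda>\<^sub>m\<^sub>a\<^sub>x\<close> the form
  \<open>\<langle>u, (I - x A) u\<rangle>\<close> is positive semidefinite, and Cauchy--Schwarz against \<open>(I - x A)\<^sup>-\<^sup>1 \<one>\<close> gives
  \<open>\<langle>\<one>, u\<rangle>\<^sup>2 \<le> W\<^sub>A(x) \<langle>u, (I - x A) u\<rangle>\<close>. For \<open>u \<in> S\<^sub>n\<close> with \<open>\<langle>u, A u\<rangle> = 0\<close> this bounds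
  \<open>|u|\<^sup>2\<close> by \<open>W\<^sub>A(x)\<close>; for arbitrary \<open>u\<close> it shows that \<open>J + x W\<^sub>A(x) A\<close>, which is feasible
  for \<open>\<vartheta>\<close>, has largest eigenvalue at most \<open>W\<^sub>A(x)\<close>.

  Conversely, the intermediate value theorem applied to \<open>W\<^sub>A'\<close> yields an \<open>x\<close> that is either a
  critical point of \<open>W\<^sub>A\<close> or an endpoint \<open>1/\<mu>\<close> towards which \<open>W\<^sub>A\<close> decreases. There
  \<open>(I - x A)\<^sup>-\<^sup>1 \<one>\<close>, corrected at an endpoint by an eigenvector of \<open>\<mu>\<close> orthogonal to \<open>\<one>\<close>,
  lies on \<open>S\<^sub>n\<close>, is \<open>A\<close>-isotropic and has squared norm \<open>W\<^sub>A(x)\<close>. So the inner supremum of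
  \<open>\<alpha>\<^sub>S\<close> equals \<open>min W\<^sub>A \<ge> \<vartheta>\<close> for every \<open>A\<close>. Finally \<open>\<alpha>\<^sub>S \<le> \<vartheta>\<close>: for \<open>B\<close> feasible
  for \<open>\<vartheta>\<close>, \<open>B - J\<close> is a weighted adjacency matrix, and its isotropic vectors on \<open>S\<^sub>n\<close>
  satisfy \<open>|v|\<^sup>4 = \<langle>v, B v\<rangle> \<le> \<lambda>\<^sub>m\<^sub>a\<^sub>x(B) |v|\<^sup>2\<close>.
\<close>

section \<open>Spectral decomposition of real symmetric matrices\<close>

lemma symmetric_mat_entry:
  assumes "symmetric_mat A"
  shows "A $ j $ i = A $ i $ j"
proof -
  have "transpose A $ j $ i = A $ j $ i" using assms unfolding symmetric_mat_def by simp
  then show ?thesis by (simp add: transpose_def)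
qed

lemma symmetric_mat_inner:
  assumes "symmetric_mat A"
  shows "(A *v u) \<bullet> y = u \<bullet> (A *v y)"
proof -
  have "A *v u = u v* A"
    using assms unfolding symmetric_mat_def by (metis transpose_matrix_vector)
  then show ?thesis by (simp add: dot_lmul_matrix)
qed

lemma symmetric_mat_uminus: "symmetric_mat A \<Longrightarrow> symmetric_mat (- A)"
  unfolding symmetric_mat_def by (simp add: transpose_def vec_eq_iff)

lemma uminus_matrix_vector_mult: "(- A) *v u = - (A *v u)" for A :: "real^'n^'m"
  by (simp add: matrix_vector_mult_def vec_eq_iff sum_negf)

lemma matrix_vector_mult_sum: "A *v (\<Sum>i\<in>S. f i) = (\<Sum>i\<in>S. A *v f i)"
  for A :: "real^'n^'m"
  using linear_sum[OF matrix_vector_mul_linear, of A f S] by (simp add: o_def)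

lemma subspace_eigenspace: "subspace (eigenspace A c)"
  unfolding subspace_def eigenspace_def
  by (auto simp: matrix_vector_right_distrib matrix_vector_mult_scaleR algebra_simps)

lemma orth_proj:
  assumes "subspace S"
  shows orth_proj_in: "orth_proj S v \<in> S"
    and orth_proj_orthogonal: "w \<in> S \<Longrightarrow> (v - orth_proj S v) \<bullet> w = 0"
proof -
  obtain y z where y: "y \<in> span S" and z: "\<And>w. w \<in> span S \<Longrightarrow> orthogonal z w" and v: "v = y + z"
    using orthogonal_subspace_decomp_exists by blast
  have "span S = S" using assms by simp
  then have y_proj: "y \<in> S \<and> (\<forall>w\<in>S. (v - y) \<bullet> w = 0)"
    using y z v by (metis add_diff_cancel_left' orthogonal_def)
  have "p = y" if "p \<in> S \<and> (\<forall>w\<in>S. (v - p) \<bullet> w = 0)" for p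
  proof -
    have "y - p \<in> S" using that y_proj assms by (simp add: subspace_diff)
    then have "(y - p) \<bullet> (y - p) = (v - p) \<bullet> (y - p) - (v - y) \<bullet> (y - p)"
      by (simp add: algebra_simps inner_diff_left)
    also have "\<dots> = 0" using that y_proj \<open>y - p \<in> S\<close> by simp
    finally show ?thesis by simp
  qed
  then have "orth_proj S v = y"
    unfolding orth_proj_def using y_proj by (rule the_equality[rotated])
  with y_proj show "orth_proj S v \<in> S" "w \<in> S \<Longrightarrow> (v - orth_proj S v) \<bullet> w = 0" by auto
qed

lemma eigenspace_orthogonal:
  assumes "symmetric_mat A" "x \<in> eigenspace A c" "y \<in> eigenspace A d" "c \<noteq> d"
  shows "x \<bullet> y = 0"
proof -
  have "c * (x \<bullet> y) = (A *v x) \<bullet> y" using assms by (simp add: eigenspace_def)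
  also have "\<dots> = x \<bullet> (A *v y)" using assms(1) by (rule symmetric_mat_inner)
  also have "\<dots> = d * (x \<bullet> y)" using assms by (simp add: eigenspace_def)
  finally show ?thesis using assms(4) by simp
qed

lemma finite_eigenvalues:
  assumes "symmetric_mat A"
  shows "finite (eigenvalues A)"
proof -
  define f where "f c = (SOME v. v \<noteq> 0 \<and> A *v v = c *\<^sub>R v)" for c
  have f: "f c \<noteq> 0 \<and> f c \<in> eigenspace A c" if "c \<in> eigenvalues A" for c
    unfolding f_def eigenspace_def using that unfolding eigenvalues_def
    by (metis (mono_tags, lifting) mem_Collect_eq someI_ex)
  have "inj_on f (eigenvalues A)"
  proof (rule inj_onI)
    fix c d assume "c \<in> eigenvalues A" "d \<in> eigenvalues A" "f c = f d"
    then have "c *\<^sub>R f c = d *\<^sub>R f c" "f c \<noteq> 0"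
      using f[of c] f[of d] unfolding eigenspace_def by auto
    then show "c = d" by (simp add: scaleR_cancel_right)
  qed
  moreover have "independent (f ` eigenvalues A)"
  proof (rule pairwise_orthogonal_independent)
    show "pairwise orthogonal (f ` eigenvalues A)"
      unfolding pairwise_def orthogonal_def
      using f eigenspace_orthogonal[OF assms] by (metis imageE)
    show "0 \<notin> f ` eigenvalues A" using f by auto
  qed
  ultimately show ?thesis using finiteI_independent finite_imageD by blast
qed

lemma quadratic_nonneg_imp_linear_coeff_zero:
  fixes q Q :: real
  assumes "\<And>t. 0 \<le> 2 * t * q + t\<^sup>2 * Q"
  shows "q = 0"
proof (rule ccontr)
  assume "q \<noteq> 0"
  define s where "s = \<bar>Q\<bar> + 1"
  have s: "s > 0" "Q < 2 * s" unfolding s_def by auto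
  have "0 \<le> (2 * (-q/s) * q + (-q/s)\<^sup>2 * Q) * s\<^sup>2" using assms[of "-q/s"] by simp
  also have "\<dots> = q\<^sup>2 * (Q - 2 * s)" using s by (simp add: field_simps power2_eq_square)
  finally show False using \<open>q \<noteq> 0\<close> s by (simp add: zero_le_mult_iff)
qed

text \<open>The maximum of the Rayleigh quotient on an invariant subspace is attained at an
  eigenvector: first-order optimality along every direction of the subspace.\<close>
lemma invariant_subspace_has_eigenvector:
  fixes A :: "real^'n^'n"
  assumes sym: "symmetric_mat A" and "subspace W" and inv: "\<And>r. r \<in> W \<Longrightarrow> A *v r \<in> W"
    and "u \<in> W" "u \<noteq> 0"
  obtains e \<mu> where "e \<in> W" "e \<noteq> 0" "A *v e = \<mu> *\<^sub>R e"
proof -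
  define K where "K = W \<inter> sphere 0 1"
  have "(1 / norm u) *\<^sub>R u \<in> K" using assms unfolding K_def by (simp add: subspace_scale)
  moreover have "compact K"
    unfolding K_def by (intro closed_Int_compact closed_subspace \<open>subspace W\<close> compact_sphere)
  moreover have "continuous_on K (\<lambda>z. z \<bullet> (A *v z))"
    by (intro continuous_on_inner continuous_on_id linear_continuous_on matrix_vector_mul_bounded_linear)
  ultimately obtain u0 where u0: "u0 \<in> K" and max: "\<And>z. z \<in> K \<Longrightarrow> z \<bullet> (A *v z) \<le> u0 \<bullet> (A *v u0)"
    using continuous_attains_sup[of K "\<lambda>z. z \<bullet> (A *v z)"] by blast
  define l where "l = u0 \<bullet> (A *v u0)"
  have u0W: "u0 \<in> W" and u0_unit: "u0 \<bullet> u0 = 1" using u0 unfolding K_def by (auto simp: dot_square_norm)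
  have le: "z \<bullet> (A *v z) \<le> l * (z \<bullet> z)" if "z \<in> W" for z
  proof (cases "z = 0")
    case False
    have "(1 / norm z) *\<^sub>R z \<in> K" using that False \<open>subspace W\<close> unfolding K_def by (simp add: subspace_scale)
    then have "((1 / norm z) *\<^sub>R z) \<bullet> (A *v ((1 / norm z) *\<^sub>R z)) \<le> l"
      using max unfolding l_def by blast
    then have "(z \<bullet> (A *v z)) / (norm z)\<^sup>2 \<le> l"
      by (simp add: matrix_vector_mult_scaleR power2_eq_square divide_inverse mult.commute mult.left_commute)
    then show ?thesis using False by (simp add: divide_le_eq dot_square_norm mult.commute)
  qed simp
  have stationary: "l * (u0 \<bullet> w) - w \<bullet> (A *v u0) = 0" if "w \<in> W" for w
  proof (rule quadratic_nonneg_imp_linear_coeff_zero)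
    fix t :: real
    have "u0 + t *\<^sub>R w \<in> W" using u0W that \<open>subspace W\<close> by (simp add: subspace_add subspace_scale)
    then have "(u0 + t *\<^sub>R w) \<bullet> (A *v (u0 + t *\<^sub>R w)) \<le> l * ((u0 + t *\<^sub>R w) \<bullet> (u0 + t *\<^sub>R w))"
      by (rule le)
    moreover have "u0 \<bullet> (A *v w) = w \<bullet> (A *v u0)"
      using symmetric_mat_inner[OF sym, of w u0] by (simp add: inner_commute)
    ultimately have "l + 2 * t * (w \<bullet> (A *v u0)) + t\<^sup>2 * (w \<bullet> (A *v w))
        \<le> l * (1 + 2 * t * (u0 \<bullet> w) + t\<^sup>2 * (w \<bullet> w))"
      using u0_unit unfolding l_def
      by (simp add: matrix_vector_right_distrib matrix_vector_mult_scaleR inner_add_left inner_add_right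
          power2_eq_square algebra_simps inner_commute[of w u0])
    then show "0 \<le> 2 * t * (l * (u0 \<bullet> w) - w \<bullet> (A *v u0)) + t\<^sup>2 * (l * (w \<bullet> w) - w \<bullet> (A *v w))"
      by (simp add: algebra_simps)
  qed
  define r where "r = A *v u0 - l *\<^sub>R u0"
  have "r \<in> W" unfolding r_def using inv[OF u0W] u0W \<open>subspace W\<close> by (simp add: subspace_diff subspace_scale)
  moreover have "r \<bullet> r = r \<bullet> (A *v u0) - l * (r \<bullet> u0)"
    unfolding r_def by (metis inner_diff_right inner_scaleR_right)
  ultimately have "r \<bullet> r = 0"
    using stationary by (simp add: inner_commute)
  then have "A *v u0 = l *\<^sub>R u0" unfolding r_def by simp
  moreover have "u0 \<noteq> 0" using u0_unit by auto
  ultimately show ?thesis using u0W that by blast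
qed

abbreviation eig_proj :: "real^'n^'n \<Rightarrow> real \<Rightarrow> real^'n \<Rightarrow> real^'n" where
  "eig_proj A c \<equiv> orth_proj (eigenspace A c)"

lemma eig_proj_in_eigenspace: "eig_proj A c u \<in> eigenspace A c"
  by (rule orth_proj_in[OF subspace_eigenspace])

lemma matrix_vector_mult_eig_proj: "A *v eig_proj A c u = c *\<^sub>R eig_proj A c u"
  using eig_proj_in_eigenspace unfolding eigenspace_def by blast

lemma inner_eig_proj: "eig_proj A c u \<bullet> y = eig_proj A c u \<bullet> eig_proj A c y"
proof -
  have "(y - eig_proj A c y) \<bullet> eig_proj A c u = 0"
    by (rule orth_proj_orthogonal[OF subspace_eigenspace eig_proj_in_eigenspace])
  then show ?thesis by (simp add: inner_commute inner_diff_right)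
qed

lemma eig_proj_orthogonal:
  "symmetric_mat A \<Longrightarrow> c \<noteq> d \<Longrightarrow> eig_proj A c u \<bullet> eig_proj A d y = 0"
  using eigenspace_orthogonal eig_proj_in_eigenspace by blast

text \<open>Spectral theorem: the orthogonal complement of all eigenspaces is an invariant
  subspace without eigenvectors, hence zero.\<close>
lemma sum_eig_proj:
  assumes sym: "symmetric_mat A"
  shows "(\<Sum>c\<in>eigenvalues A. eig_proj A c u) = u"
proof (rule ccontr)
  define W where "W = {r. \<forall>c\<in>eigenvalues A. \<forall>e\<in>eigenspace A c. r \<bullet> e = 0}"
  define r where "r = u - (\<Sum>c\<in>eigenvalues A. eig_proj A c u)"
  assume "(\<Sum>c\<in>eigenvalues A. eig_proj A c u) \<noteq> u"
  then have "r \<noteq> 0" unfolding r_def by simp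
  have "subspace W" unfolding W_def subspace_def by (simp add: inner_add_left)
  moreover have "A *v w \<in> W" if "w \<in> W" for w
    using that symmetric_mat_inner[OF sym, of w] unfolding W_def eigenspace_def by simp
  moreover have "r \<in> W" unfolding W_def
  proof (intro CollectI ballI)
    fix d e assume d: "d \<in> eigenvalues A" and e: "e \<in> eigenspace A d"
    have "(\<Sum>c\<in>eigenvalues A. eig_proj A c u) \<bullet> e = (\<Sum>c\<in>eigenvalues A. eig_proj A c u \<bullet> e)"
      by (simp add: inner_sum_left)
    also have "\<dots> = (\<Sum>c\<in>{d}. eig_proj A c u \<bullet> e)"
      using finite_eigenvalues[OF sym] d eigenspace_orthogonal[OF sym eig_proj_in_eigenspace e]
      by (intro sum.mono_neutral_right) auto
    finally show "r \<bullet> e = 0"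
      using orth_proj_orthogonal[OF subspace_eigenspace e, of u] unfolding r_def
      by (simp add: inner_diff_left)
  qed
  ultimately obtain e \<mu> where "e \<in> W" "e \<noteq> 0" "A *v e = \<mu> *\<^sub>R e"
    using invariant_subspace_has_eigenvector[OF sym] \<open>r \<noteq> 0\<close> by metis
  then have "e \<bullet> e = 0" unfolding W_def eigenvalues_def eigenspace_def by blast
  with \<open>e \<noteq> 0\<close> show False by simp
qed

lemma inner_eq_sum_eig_proj:
  assumes "symmetric_mat A"
  shows "u \<bullet> y = (\<Sum>c\<in>eigenvalues A. eig_proj A c u \<bullet> eig_proj A c y)"
proof -
  have "u \<bullet> y = (\<Sum>c\<in>eigenvalues A. eig_proj A c u) \<bullet> y" using sum_eig_proj[OF assms] by simp
  also have "\<dots> = (\<Sum>c\<in>eigenvalues A. eig_proj A c u \<bullet> eig_proj A c y)"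
    unfolding inner_sum_left by (rule sum.cong[OF refl inner_eig_proj])
  finally show ?thesis .
qed

lemma inner_matrix_eq_sum_eig_proj:
  assumes "symmetric_mat A"
  shows "u \<bullet> (A *v u) = (\<Sum>c\<in>eigenvalues A. c * (eig_proj A c u \<bullet> eig_proj A c u))"
proof -
  have "A *v u = (\<Sum>c\<in>eigenvalues A. A *v eig_proj A c u)"
    using sum_eig_proj[OF assms, of u] by (metis matrix_vector_mult_sum)
  then have "u \<bullet> (A *v u) = (\<Sum>c\<in>eigenvalues A. c * (eig_proj A c u \<bullet> u))"
    by (simp add: matrix_vector_mult_eig_proj inner_sum_right inner_commute)
  also have "\<dots> = (\<Sum>c\<in>eigenvalues A. c * (eig_proj A c u \<bullet> eig_proj A c u))"
    by (rule sum.cong[OF refl]) (simp only: inner_eig_proj[of A _ u u])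
  finally show ?thesis .
qed

lemma eigenvalues_nonempty:
  fixes A :: "real^'n^'n"
  assumes "symmetric_mat A"
  shows "eigenvalues A \<noteq> {}"
proof
  assume "eigenvalues A = {}"
  then have "(ones :: real^'n) = 0" using sum_eig_proj[OF assms, of ones] by simp
  then show False by (metis ones_def vec_lambda_beta zero_index zero_neq_one)
qed

lemma lambda_max_in_eigenvalues: "symmetric_mat A \<Longrightarrow> lambda_max A \<in> eigenvalues A"
  unfolding lambda_max_def using finite_eigenvalues eigenvalues_nonempty by (rule Max_in)

lemma lambda_min_in_eigenvalues: "symmetric_mat A \<Longrightarrow> lambda_min A \<in> eigenvalues A"
  unfolding lambda_min_def using finite_eigenvalues eigenvalues_nonempty by (rule Min_in)

lemma eigenvalue_le_lambda_max: "symmetric_mat A \<Longrightarrow> c \<in> eigenvalues A \<Longrightarrow> c \<le> lambda_max A"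
  unfolding lambda_max_def by (simp add: finite_eigenvalues)

lemma lambda_min_le_eigenvalue: "symmetric_mat A \<Longrightarrow> c \<in> eigenvalues A \<Longrightarrow> lambda_min A \<le> c"
  unfolding lambda_min_def by (simp add: finite_eigenvalues)

lemma rayleigh_le_lambda_max:
  assumes "symmetric_mat A"
  shows "u \<bullet> (A *v u) \<le> lambda_max A * (u \<bullet> u)"
  unfolding inner_matrix_eq_sum_eig_proj[OF assms] inner_eq_sum_eig_proj[OF assms, of u u] sum_distrib_left
  by (rule sum_mono) (simp add: mult_right_mono eigenvalue_le_lambda_max[OF assms])

lemma lambda_min_le_rayleigh:
  assumes "symmetric_mat A"
  shows "lambda_min A * (u \<bullet> u) \<le> u \<bullet> (A *v u)"
  unfolding inner_matrix_eq_sum_eig_proj[OF assms] inner_eq_sum_eig_proj[OF assms, of u u] sum_distrib_left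
  by (rule sum_mono) (simp add: mult_right_mono lambda_min_le_eigenvalue[OF assms])

lemma lambda_max_le_if_rayleigh_le:
  assumes "symmetric_mat A" and "\<And>u. u \<bullet> (A *v u) \<le> r * (u \<bullet> u)"
  shows "lambda_max A \<le> r"
proof -
  obtain u where "u \<noteq> 0" "A *v u = lambda_max A *\<^sub>R u"
    using lambda_max_in_eigenvalues[OF assms(1)] unfolding eigenvalues_def by blast
  then show ?thesis using assms(2)[of u] by simp
qed

lemma psd_form_eq_zero_imp_null:
  assumes "symmetric_mat A" and psd: "\<And>u. 0 \<le> u \<bullet> (A *v u)" and "v \<bullet> (A *v v) = 0"
  shows "A *v v = 0"
proof -
  have "w \<bullet> (A *v v) = 0" for w
  proof (rule quadratic_nonneg_imp_linear_coeff_zero)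
    fix t :: real
    have "v \<bullet> (A *v w) = w \<bullet> (A *v v)"
      using symmetric_mat_inner[OF assms(1), of w v] by (simp add: inner_commute)
    then show "0 \<le> 2 * t * (w \<bullet> (A *v v)) + t\<^sup>2 * (w \<bullet> (A *v w))"
      using psd[of "v + t *\<^sub>R w"] \<open>v \<bullet> (A *v v) = 0\<close>
      by (simp add: matrix_vector_right_distrib matrix_vector_mult_scaleR inner_add_left inner_add_right
          power2_eq_square algebra_simps)
  qed
  then show ?thesis by (metis inner_eq_zero_iff)
qed

lemma psd_zero_diagonal_eq_zero:
  assumes "symmetric_mat A" and "\<And>u. 0 \<le> u \<bullet> (A *v u)" and "\<And>i. A $ i $ i = 0"
  shows "A = 0"
proof -
  have "column j A = 0" for j
    using psd_form_eq_zero_imp_null[OF assms(1,2), of "axis j 1"] assms(3)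
    by (simp add: matrix_vector_mult_basis column_def inner_axis')
  then show ?thesis by (simp add: vec_eq_iff column_def)
qed

lemma lambda_min_neg:
  assumes "symmetric_mat A" "\<And>i. A $ i $ i = 0" "A \<noteq> 0"
  shows "lambda_min A < 0"
proof (rule ccontr)
  assume "\<not> lambda_min A < 0"
  then have "0 \<le> u \<bullet> (A *v u)" for u
    using lambda_min_le_rayleigh[OF assms(1), of u] by (smt (verit) inner_ge_zero mult_nonneg_nonneg)
  with assms show False using psd_zero_diagonal_eq_zero by blast
qed

lemma lambda_max_pos:
  assumes "symmetric_mat A" "\<And>i. A $ i $ i = 0" "A \<noteq> 0"
  shows "lambda_max A > 0"
proof (rule ccontr)
  assume "\<not> lambda_max A > 0"
  then have "0 \<le> u \<bullet> ((- A) *v u)" for u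
    using rayleigh_le_lambda_max[OF assms(1), of u]
    by (simp add: uminus_matrix_vector_mult) (smt (verit) inner_ge_zero mult_nonpos_nonneg)
  then have "- A = 0"
    using psd_zero_diagonal_eq_zero[OF symmetric_mat_uminus[OF assms(1)]] assms(2) by simp
  with assms(3) show False by simp
qed


section \<open>Critical points of \<open>x \<mapsto> \<Sum>c\<in>C. w c / (1 - c x)\<close>\<close>

text \<open>The derivative of \<open>x \<mapsto> \<Sum>c\<in>C. w c / (1 - c * x)\<close>.\<close>
definition walk_deriv :: "real set \<Rightarrow> (real \<Rightarrow> real) \<Rightarrow> real \<Rightarrow> real" where
  "walk_deriv C w x = (\<Sum>c\<in>C. w c * c / (1 - c * x)\<^sup>2)"

lemma walk_deriv_mirror:
  "walk_deriv (uminus ` C) (\<lambda>c. w (- c)) y = - walk_deriv C w (- y)"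
  unfolding walk_deriv_def by (subst sum.reindex) (auto simp: inj_on_def sum_negf)

lemma continuous_on_walk_deriv:
  assumes "\<And>x c. x \<in> S \<Longrightarrow> c \<in> C \<Longrightarrow> 1 - c * x \<noteq> 0"
  shows "continuous_on S (walk_deriv C w)"
  unfolding walk_deriv_def[abs_def] using assms by (intro continuous_intros) auto

lemma walk_deriv_at_top_at_pole:
  assumes "finite C" "M \<in> C" "0 < M" "0 < w M" "\<forall>c\<in>C. c \<le> M"
  shows "LIM y at_left (1 / M). walk_deriv C w y :> at_top"
proof -
  have "walk_deriv C w y = (\<Sum>c\<in>C - {M}. w c * c / (1 - c * y)\<^sup>2) + w M * M / (1 - M * y)\<^sup>2" for y
    unfolding walk_deriv_def using assms(1,2) by (simp add: sum.remove add.commute)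
  moreover have "((\<lambda>y. \<Sum>c\<in>C - {M}. w c * c / (1 - c * y)\<^sup>2) \<longlongrightarrow>
      (\<Sum>c\<in>C - {M}. w c * c / (1 - c * (1 / M))\<^sup>2)) (at_left (1 / M))"
  proof (intro tendsto_intros)
    show "(1 - c * (1 / M))\<^sup>2 \<noteq> 0" if "c \<in> C - {M}" for c
      using that assms(3) by (auto simp: field_simps)
  qed
  moreover have "LIM y at_left (1 / M). w M * M / (1 - M * y)\<^sup>2 :> at_top"
  proof (rule LIM_at_top_divide[where a = "w M * M"])
    have "((\<lambda>y. (1 - M * y)\<^sup>2) \<longlongrightarrow> (1 - M * (1 / M))\<^sup>2) (at_left (1 / M))"
      by (intro tendsto_intros)
    then show "((\<lambda>y. (1 - M * y)\<^sup>2) \<longlongrightarrow> 0) (at_left (1 / M))"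
      using assms(3) by simp
    have "\<forall>\<^sub>F y in at_left (1 / M). y \<in> {0<..<1 / M}"
      using assms(3) by (intro eventually_at_left_real) simp
    then show "\<forall>\<^sub>F y in at_left (1 / M). 0 < (1 - M * y)\<^sup>2"
      by eventually_elim (use assms(3) in \<open>simp add: field_simps\<close>)
  qed (use assms in auto)
  ultimately show ?thesis by (simp add: filterlim_tendsto_add_at_top)
qed

lemma walk_deriv_pos_or_right_endpoint:
  assumes "finite C" "\<forall>c\<in>C. 0 < w c" "\<forall>c\<in>C. c \<le> M" "0 < M"
  obtains y where "y \<in> {0..1 / M}" "\<forall>c\<in>C. 0 < 1 - c * y" "0 < walk_deriv C w y \<or> y = 1 / M"
proof (cases "M \<in> C")
  case False
  then have "\<forall>c\<in>C. c < M" using assms(3) order_le_neq_trans by blast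
  then have "\<forall>c\<in>C. 0 < 1 - c * (1 / M)" using assms(4) by (simp add: field_simps)
  then show ?thesis by (rule that[of "1 / M", rotated]) (use assms(4) in simp_all)
next
  case True
  have "\<forall>\<^sub>F y in at_left (1 / M). 0 < walk_deriv C w y"
    using walk_deriv_at_top_at_pole[OF assms(1) True assms(4)] assms(2,3) True
    by (simp add: filterlim_at_top_dense)
  moreover have "\<forall>\<^sub>F y in at_left (1 / M). y \<in> {0<..<1 / M}"
    using assms(4) by (intro eventually_at_left_real) simp
  ultimately obtain y where y: "0 < walk_deriv C w y" "y \<in> {0<..<1 / M}"
    using eventually_happens'[OF trivial_limit_at_left_real] eventually_conj by blast
  show ?thesis
  proof (rule that)
    show "y \<in> {0..1 / M}" "0 < walk_deriv C w y \<or> y = 1 / M" using y by auto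
  next
    show "\<forall>c\<in>C. 0 < 1 - c * y"
    proof
      fix c assume "c \<in> C"
      have "c * y \<le> M * y" using assms(3) \<open>c \<in> C\<close> y(2) by (simp add: mult_right_mono)
      also have "\<dots> < 1" using y(2) assms(4) by (simp add: field_simps)
      finally show "0 < 1 - c * y" by simp
    qed
  qed
qed

lemma one_minus_mult_pos_between:
  fixes a b c x :: real
  assumes "a \<le> x" "x \<le> b" "0 < 1 - c * a" "0 < 1 - c * b"
  shows "0 < 1 - c * x"
proof (cases "0 \<le> c")
  case True
  then have "c * x \<le> c * b" using assms(2) by (simp add: mult_left_mono)
  then show ?thesis using assms(4) by simp
next
  case False
  then have "c * x \<le> c * a" using assms(1) by (simp add: mult_left_mono_neg)
  then show ?thesis using assms(3) by simp
qed

lemma walk_deriv_neg_or_left_endpoint: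
  assumes "finite C" "\<forall>c\<in>C. 0 < w c" "\<forall>c\<in>C. m \<le> c" "m < 0"
  obtains x where "x \<in> {1 / m..0}" "\<forall>c\<in>C. 0 < 1 - c * x" "walk_deriv C w x < 0 \<or> x = 1 / m"
proof -
  have "finite (uminus ` C)" "\<forall>c\<in>uminus ` C. 0 < w (- c)" "\<forall>c\<in>uminus ` C. c \<le> - m" "0 < - m"
    using assms by auto
  then obtain y where y: "y \<in> {0..1 / (- m)}" "\<forall>c\<in>uminus ` C. 0 < 1 - c * y"
      "0 < walk_deriv (uminus ` C) (\<lambda>c. w (- c)) y \<or> y = 1 / (- m)"
    by (rule walk_deriv_pos_or_right_endpoint)
  show ?thesis
  proof (rule that)
    show "- y \<in> {1 / m..0}" using y(1) by (simp add: le_minus_iff)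
    show "\<forall>c\<in>C. 0 < 1 - c * - y" using y(2) by force
    show "walk_deriv C w (- y) < 0 \<or> - y = 1 / m" using y(3) unfolding walk_deriv_mirror by force
  qed
qed

lemma walk_deriv_root_or_endpoint:
  assumes "finite C" "\<forall>c\<in>C. 0 < w c" "\<forall>c\<in>C. m \<le> c \<and> c \<le> M" "m < 0" "0 < M"
  obtains x where "x \<in> {1 / m..1 / M}" "\<forall>c\<in>C. 0 < 1 - c * x"
    "walk_deriv C w x = 0 \<or> ((x = 1 / m \<or> x = 1 / M) \<and> x * walk_deriv C w x \<le> 0)"
proof -
  obtain b where b: "b \<in> {0..1 / M}" "\<forall>c\<in>C. 0 < 1 - c * b" "0 < walk_deriv C w b \<or> b = 1 / M"
    using walk_deriv_pos_or_right_endpoint[OF assms(1,2)] assms(3,5) by blast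
  obtain a where a: "a \<in> {1 / m..0}" "\<forall>c\<in>C. 0 < 1 - c * a" "walk_deriv C w a < 0 \<or> a = 1 / m"
    using walk_deriv_neg_or_left_endpoint[OF assms(1,2)] assms(3,4) by blast
  have "a \<le> b" and range: "{a..b} \<subseteq> {1 / m..1 / M}" using a(1) b(1) by auto
  consider "b = 1 / M" "walk_deriv C w b \<le> 0" | "a = 1 / m" "0 \<le> walk_deriv C w a"
    | "walk_deriv C w a < 0" "0 < walk_deriv C w b"
    using a(3) b(3) by linarith
  then show ?thesis
  proof cases
    case 1
    then have "b * walk_deriv C w b \<le> 0" using b(1) by (intro mult_nonneg_nonpos) auto
    then show ?thesis using 1 b(2) range \<open>a \<le> b\<close> by (intro that[of b]) auto
  next
    case 2
    then have "a * walk_deriv C w a \<le> 0" using a(1) by (intro mult_nonpos_nonneg) auto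
    then show ?thesis using 2 a(2) range \<open>a \<le> b\<close> by (intro that[of a]) auto
  next
    case 3
    have no_pole: "\<forall>c\<in>C. 0 < 1 - c * x" if "x \<in> {a..b}" for x
      using that a(2) b(2) one_minus_mult_pos_between by auto
    then have "continuous_on {a..b} (walk_deriv C w)"
      by (intro continuous_on_walk_deriv) force
    then obtain x where "x \<in> {a..b}" "walk_deriv C w x = 0"
      using IVT'[of "walk_deriv C w" a 0 b] 3 \<open>a \<le> b\<close> by fastforce
    then show ?thesis using no_pole range by (intro that[of x]) auto
  qed
qed

section \<open>The walk-generating function\<close>

definition spec_support :: "real^'n^'n \<Rightarrow> real set" where
  "spec_support A = {c \<in> eigenvalues A. spec_weight A c \<noteq> 0}"

definition walk_sum :: "real^'n^'n \<Rightarrow> real \<Rightarrow> real" where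
  "walk_sum A x = (\<Sum>c\<in>spec_support A. spec_weight A c / (1 - c * x))"

text \<open>\<open>walk_vec A x = (I - x A)\<^sup>-\<^sup>1 \<one>\<close> when \<open>x\<close> is not a pole.\<close>
definition walk_vec :: "real^'n^'n \<Rightarrow> real \<Rightarrow> real^'n" where
  "walk_vec A x = (\<Sum>c\<in>spec_support A. (1 / (1 - c * x)) *\<^sub>R eig_proj A c ones)"

lemma spec_weight_eq: "spec_weight A c = eig_proj A c ones \<bullet> eig_proj A c ones"
  unfolding spec_weight_def by (metis inner_eig_proj inner_commute)

lemma spec_support_pos: "c \<in> spec_support A \<Longrightarrow> 0 < spec_weight A c"
  unfolding spec_support_def spec_weight_eq by (simp add: order_less_le)

lemma finite_spec_support: "symmetric_mat A \<Longrightarrow> finite (spec_support A)"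
  unfolding spec_support_def by (simp add: finite_eigenvalues)

lemma sum_spec_support_eig_proj:
  assumes "symmetric_mat A"
  shows "(\<Sum>c\<in>spec_support A. eig_proj A c ones) = ones"
proof -
  have "(\<Sum>c\<in>spec_support A. eig_proj A c ones) = (\<Sum>c\<in>eigenvalues A. eig_proj A c ones)"
    by (rule sum.mono_neutral_left) (auto simp: finite_eigenvalues[OF assms] spec_support_def spec_weight_eq)
  then show ?thesis using sum_eig_proj[OF assms] by simp
qed

lemma inner_sum_eig_proj_ones:
  assumes "symmetric_mat A" "finite C"
  shows "(\<Sum>c\<in>C. f c *\<^sub>R eig_proj A c ones) \<bullet> (\<Sum>d\<in>C. g d *\<^sub>R eig_proj A d ones)
    = (\<Sum>c\<in>C. f c * g c * spec_weight A c)"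
proof -
  have "eig_proj A c ones \<bullet> (\<Sum>d\<in>C. g d *\<^sub>R eig_proj A d ones) = g c * spec_weight A c"
    if "c \<in> C" for c
  proof -
    have "eig_proj A c ones \<bullet> (\<Sum>d\<in>C. g d *\<^sub>R eig_proj A d ones)
        = (\<Sum>d\<in>{c}. g d * (eig_proj A c ones \<bullet> eig_proj A d ones))"
      unfolding inner_sum_right inner_scaleR_right
      using assms that eig_proj_orthogonal[OF assms(1)] by (intro sum.mono_neutral_right) auto
    then show ?thesis by (simp add: spec_weight_eq)
  qed
  then show ?thesis by (simp add: inner_sum_left sum_distrib_left mult.assoc)
qed

lemma matrix_vector_mult_walk_vec:
  "A *v walk_vec A x = (\<Sum>c\<in>spec_support A. (c / (1 - c * x)) *\<^sub>R eig_proj A c ones)"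
  unfolding walk_vec_def
  by (simp add: matrix_vector_mult_sum matrix_vector_mult_scaleR matrix_vector_mult_eig_proj)

lemma walk_vec_resolvent:
  assumes "symmetric_mat A" "\<forall>c\<in>spec_support A. 1 - c * x \<noteq> 0"
  shows "walk_vec A x - x *\<^sub>R (A *v walk_vec A x) = ones"
proof -
  have "walk_vec A x - x *\<^sub>R (A *v walk_vec A x)
      = (\<Sum>c\<in>spec_support A. (1 / (1 - c * x) - x * (c / (1 - c * x))) *\<^sub>R eig_proj A c ones)"
    unfolding matrix_vector_mult_walk_vec unfolding walk_vec_def
    by (simp add: scaleR_sum_right sum_subtractf scaleR_diff_left)
  also have "\<dots> = (\<Sum>c\<in>spec_support A. eig_proj A c ones)"
    using assms(2) by (intro sum.cong refl) (simp add: diff_divide_distrib[symmetric] mult.commute)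
  finally show ?thesis using sum_spec_support_eig_proj[OF assms(1)] by simp
qed

lemma inner_walk_vec_resolvent:
  assumes "symmetric_mat A" "\<forall>c\<in>spec_support A. 1 - c * x \<noteq> 0"
  shows "p \<bullet> walk_vec A x - x * (p \<bullet> (A *v walk_vec A x)) = ones \<bullet> p"
  using arg_cong[OF walk_vec_resolvent[OF assms], of "\<lambda>z. p \<bullet> z"]
  by (simp add: inner_diff_right inner_commute[of p ones])

lemma inner_ones_walk_vec:
  assumes "symmetric_mat A"
  shows "ones \<bullet> walk_vec A x = walk_sum A x"
proof -
  have "ones \<bullet> walk_vec A x = (\<Sum>c\<in>spec_support A. 1 *\<^sub>R eig_proj A c ones) \<bullet> walk_vec A x"
    using sum_spec_support_eig_proj[OF assms] by simp
  also have "\<dots> = walk_sum A x"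
    unfolding walk_vec_def walk_sum_def inner_sum_eig_proj_ones[OF assms finite_spec_support[OF assms]]
    by simp
  finally show ?thesis .
qed

lemma walk_vec_form:
  assumes "symmetric_mat A"
  shows "walk_vec A x \<bullet> (A *v walk_vec A x) = walk_deriv (spec_support A) (spec_weight A) x"
  unfolding matrix_vector_mult_walk_vec unfolding walk_vec_def walk_deriv_def
    inner_sum_eig_proj_ones[OF assms finite_spec_support[OF assms]]
  by (simp add: power2_eq_square mult.commute)

lemma walk_gen_eq_walk_sum:
  assumes "\<forall>c\<in>spec_support A. 1 - c * x \<noteq> 0"
  shows "walk_gen A x = ereal (walk_sum A x)"
  using assms unfolding walk_gen_def walk_sum_def spec_support_def by force

lemma walk_gen_pole:
  assumes "c \<in> spec_support A" "1 - c * x = 0"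
  shows "walk_gen A x = \<infinity>"
  using assms spec_support_pos[OF assms(1)] unfolding walk_gen_def spec_support_def by auto

lemma resolvent_form_nonneg:
  assumes "symmetric_mat A" "\<forall>c\<in>eigenvalues A. 0 \<le> 1 - c * x"
  shows "0 \<le> u \<bullet> u - x * (u \<bullet> (A *v u))"
proof -
  have "u \<bullet> u - x * (u \<bullet> (A *v u))
      = (\<Sum>c\<in>eigenvalues A. (1 - c * x) * (eig_proj A c u \<bullet> eig_proj A c u))"
    unfolding inner_eq_sum_eig_proj[OF assms(1), of u u] inner_matrix_eq_sum_eig_proj[OF assms(1)]
    by (simp add: sum_distrib_left sum_subtractf algebra_simps)
  also have "\<dots> \<ge> 0" using assms(2) by (intro sum_nonneg mult_nonneg_nonneg) auto
  finally show ?thesis .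
qed

lemma quadratic_nonneg_imp_discriminant_le:
  fixes a b g :: real
  assumes "\<And>t. 0 \<le> a - 2 * t * b + t\<^sup>2 * g" "0 \<le> g"
  shows "b\<^sup>2 \<le> a * g"
proof (cases "g = 0")
  case True
  then have "b = 0"
    using quadratic_nonneg_imp_linear_coeff_zero[of "- b" "0"] assms(1)[of "(a + 1) / (2 * b)"]
    by (cases "b = 0") (simp_all add: field_simps)
  with True show ?thesis by simp
next
  case False
  then have "0 < g" using assms(2) by simp
  have "0 \<le> a - 2 * (b / g) * b + (b / g)\<^sup>2 * g" by (rule assms(1))
  also have "\<dots> = (a * g - b\<^sup>2) / g" using \<open>0 < g\<close> by (simp add: field_simps power2_eq_square)
  finally show ?thesis using \<open>0 < g\<close> by (simp add: zero_le_divide_iff)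
qed

text \<open>Cauchy--Schwarz for the positive semidefinite form \<open>\<langle>p, (I - x A) q\<rangle>\<close>, applied to
  \<open>u\<close> and \<open>walk_vec A x\<close>.\<close>
lemma walk_sum_cauchy_schwarz:
  assumes sym: "symmetric_mat A" and nonneg: "\<forall>c\<in>eigenvalues A. 0 \<le> 1 - c * x"
    and no_pole: "\<forall>c\<in>spec_support A. 1 - c * x \<noteq> 0"
  shows "(ones \<bullet> u)\<^sup>2 \<le> walk_sum A x * (u \<bullet> u - x * (u \<bullet> (A *v u)))"
proof (rule quadratic_nonneg_imp_discriminant_le)
  define y where "y = walk_vec A x"
  have yu: "u \<bullet> y - x * (u \<bullet> (A *v y)) = ones \<bullet> u"
    unfolding y_def by (rule inner_walk_vec_resolvent[OF sym no_pole])
  have yy: "y \<bullet> y - x * (y \<bullet> (A *v y)) = walk_sum A x"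
    unfolding y_def inner_walk_vec_resolvent[OF sym no_pole] inner_ones_walk_vec[OF sym] ..
  have Ay: "y \<bullet> (A *v u) = u \<bullet> (A *v y)"
    using symmetric_mat_inner[OF sym, of y u] by (simp add: inner_commute)
  fix t :: real
  have "0 \<le> (y - t *\<^sub>R u) \<bullet> (y - t *\<^sub>R u) - x * ((y - t *\<^sub>R u) \<bullet> (A *v (y - t *\<^sub>R u)))"
    by (rule resolvent_form_nonneg[OF sym nonneg])
  also have "\<dots> = (y \<bullet> y - x * (y \<bullet> (A *v y))) - 2 * t * (u \<bullet> y - x * (u \<bullet> (A *v y)))
      + t\<^sup>2 * (u \<bullet> u - x * (u \<bullet> (A *v u)))"
    using Ay by (simp add: matrix_vector_mult_diff_distrib matrix_vector_mult_scaleR inner_diff_left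
        inner_diff_right inner_commute[of u y] power2_eq_square algebra_simps)
  finally show "0 \<le> walk_sum A x - 2 * t * (ones \<bullet> u) + t\<^sup>2 * (u \<bullet> u - x * (u \<bullet> (A *v u)))"
    unfolding yu yy .
next
  show "0 \<le> u \<bullet> u - x * (u \<bullet> (A *v u))" by (rule resolvent_form_nonneg[OF sym nonneg])
qed

lemma walk_sum_nonneg:
  assumes "symmetric_mat A" "\<forall>c\<in>eigenvalues A. 0 \<le> 1 - c * x"
    "\<forall>c\<in>spec_support A. 1 - c * x \<noteq> 0"
  shows "0 \<le> walk_sum A x"
  using resolvent_form_nonneg[OF assms(1,2), of "walk_vec A x"]
  unfolding inner_walk_vec_resolvent[OF assms(1,3)] inner_ones_walk_vec[OF assms(1)] .

lemma one_minus_eigenvalue_mult_nonneg: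
  assumes "symmetric_mat A" "lambda_min A < 0" "0 < lambda_max A"
    "x \<in> {1 / lambda_min A..1 / lambda_max A}" "c \<in> eigenvalues A"
  shows "0 \<le> 1 - c * x"
proof (cases "0 \<le> x")
  case True
  have "c * x \<le> lambda_max A * x"
    using True eigenvalue_le_lambda_max[OF assms(1,5)] by (simp add: mult_right_mono)
  also have "\<dots> \<le> 1" using assms(3,4) by (simp add: le_divide_eq mult.commute)
  finally show ?thesis by simp
next
  case False
  have "c * x \<le> lambda_min A * x"
    using False lambda_min_le_eigenvalue[OF assms(1,5)] by (simp add: mult_right_mono_neg)
  also have "\<dots> \<le> 1" using assms(2,4) by (simp add: divide_le_eq mult.commute)
  finally show ?thesis by simp
qed

section \<open>Isotropic vectors on the sphere\<close>

definition spherical_sup :: "real^'n^'n \<Rightarrow> real" where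
  "spherical_sup A = Sup {(norm v)\<^sup>2 | v. v \<in> sphere_S \<and> v \<bullet> (A *v v) = 0}"

lemma inner_ones_ones: "ones \<bullet> (ones :: real^'n) = real CARD('n)"
  by (simp add: ones_def inner_vec_def)

lemma norm_le_if_sphere_S:
  fixes v :: "real^'n"
  assumes "v \<in> sphere_S"
  shows "(norm v)\<^sup>2 \<le> real CARD('n)"
proof -
  have "(norm v)\<^sup>2 = ones \<bullet> v" using assms unfolding sphere_S_def by simp
  also have "\<dots> \<le> norm (ones :: real^'n) * norm v" by (rule norm_cauchy_schwarz)
  finally have "norm v \<le> norm (ones :: real^'n)"
    by (cases "norm v = 0") (simp_all add: power2_eq_square)
  then have "(norm v)\<^sup>2 \<le> (norm (ones :: real^'n))\<^sup>2" by (simp add: power_mono)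
  then show ?thesis by (simp add: power2_norm_eq_inner inner_ones_ones)
qed

lemma spherical_sup_upper:
  assumes "v \<in> sphere_S" "v \<bullet> (A *v v) = 0"
  shows "(norm v)\<^sup>2 \<le> spherical_sup A"
  unfolding spherical_sup_def
  by (rule cSup_upper) (use assms norm_le_if_sphere_S in \<open>auto simp: bdd_above_def\<close>)

lemma spherical_sup_least:
  assumes "\<And>v. v \<in> sphere_S \<Longrightarrow> v \<bullet> (A *v v) = 0 \<Longrightarrow> (norm v)\<^sup>2 \<le> b"
  shows "spherical_sup A \<le> b"
proof -
  have "(0 :: real^'n) \<in> sphere_S" unfolding sphere_S_def by simp
  then show ?thesis unfolding spherical_sup_def by (intro cSup_least) (use assms in auto)
qed

lemma spherical_sup_zero: "spherical_sup (0 :: real^'n^'n) = real CARD('n)"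
proof (rule antisym)
  show "spherical_sup (0 :: real^'n^'n) \<le> real CARD('n)"
    by (rule spherical_sup_least) (rule norm_le_if_sphere_S)
  have "(ones :: real^'n) \<in> sphere_S" unfolding sphere_S_def by (simp add: power2_norm_eq_inner)
  then have "(norm (ones :: real^'n))\<^sup>2 \<le> spherical_sup (0 :: real^'n^'n)"
    by (rule spherical_sup_upper) simp
  then show "real CARD('n) \<le> spherical_sup (0 :: real^'n^'n)"
    by (simp add: power2_norm_eq_inner inner_ones_ones)
qed

lemma spherical_sup_le_walk_sum:
  fixes A :: "real^'n^'n"
  assumes "symmetric_mat A" "\<forall>c\<in>eigenvalues A. 0 \<le> 1 - c * x"
    "\<forall>c\<in>spec_support A. 1 - c * x \<noteq> 0"
  shows "spherical_sup A \<le> walk_sum A x"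
proof (rule spherical_sup_least)
  fix v :: "real^'n" assume v: "v \<in> sphere_S" "v \<bullet> (A *v v) = 0"
  then have "ones \<bullet> v = v \<bullet> v" unfolding sphere_S_def by (simp add: power2_norm_eq_inner)
  then have "(v \<bullet> v) * (v \<bullet> v) \<le> walk_sum A x * (v \<bullet> v)"
    using walk_sum_cauchy_schwarz[OF assms, of v] v(2) by (simp add: power2_eq_square)
  then have "v \<bullet> v \<le> walk_sum A x"
    using walk_sum_nonneg[OF assms] by (metis inner_ge_zero mult_right_le_imp_le order_le_less)
  then show "(norm v)\<^sup>2 \<le> walk_sum A x" by (simp add: power2_norm_eq_inner)
qed

lemma eigenvector_orthogonal_if_spec_weight_zero:
  assumes "symmetric_mat A" "e \<in> eigenspace A \<mu>" "spec_weight A \<mu> = 0"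
  shows "ones \<bullet> e = 0" and "walk_vec A x \<bullet> e = 0"
proof -
  have "eig_proj A \<mu> ones = 0" using assms(3) by (simp add: spec_weight_eq)
  then show "ones \<bullet> e = 0" using orth_proj_orthogonal[OF subspace_eigenspace assms(2), of ones] by simp
  have "eig_proj A c ones \<bullet> e = 0" if "c \<in> spec_support A" for c
  proof -
    have "c \<noteq> \<mu>" using that assms(3) unfolding spec_support_def by auto
    then show ?thesis by (rule eigenspace_orthogonal[OF assms(1) eig_proj_in_eigenspace assms(2)])
  qed
  then show "walk_vec A x \<bullet> e = 0" unfolding walk_vec_def by (simp add: inner_sum_left)
qed

lemma exists_eigenvector_orthogonal_walk_vec:
  fixes A :: "real^'n^'n"
  assumes sym: "symmetric_mat A" and no_pole: "\<forall>c\<in>spec_support A. 1 - c * x \<noteq> 0"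
    and "\<mu> \<in> eigenvalues A" "\<mu> * x = 1" "0 \<le> s"
  obtains e where "A *v e = \<mu> *\<^sub>R e" "ones \<bullet> e = 0" "walk_vec A x \<bullet> e = 0" "e \<bullet> e = s"
proof -
  obtain e0 where e0: "e0 \<noteq> 0" "e0 \<in> eigenspace A \<mu>"
    using assms(3) unfolding eigenvalues_def eigenspace_def by blast
  have "\<mu> \<notin> spec_support A" using no_pole assms(4) by (auto simp: algebra_simps)
  then have weight: "spec_weight A \<mu> = 0" using assms(3) unfolding spec_support_def by simp
  define e where "e = sqrt (s / (e0 \<bullet> e0)) *\<^sub>R e0"
  have "e \<in> eigenspace A \<mu>" unfolding e_def by (rule subspace_scale[OF subspace_eigenspace e0(2)])
  moreover have "e \<bullet> e = (sqrt (s / (e0 \<bullet> e0)))\<^sup>2 * (e0 \<bullet> e0)"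
    unfolding e_def inner_scaleR_left inner_scaleR_right power2_eq_square by (simp only: mult.assoc)
  then have "e \<bullet> e = s" using e0(1) \<open>0 \<le> s\<close> by simp
  ultimately show ?thesis
    using that[of e] eigenvector_orthogonal_if_spec_weight_zero[OF sym _ weight]
    unfolding eigenspace_def by simp
qed

text \<open>At a critical point of \<open>W\<^sub>A\<close>, \<open>walk_vec A x\<close> itself is the required vector; at an endpoint
  \<open>x = 1/\<mu>\<close> an eigenvector of \<open>\<mu>\<close> orthogonal to \<open>\<one>\<close> is added to absorb \<open>x W\<^sub>A'(x) \<le> 0\<close>.\<close>
lemma exists_null_sphere_vector:
  fixes A :: "real^'n^'n" and x :: real
  defines "D \<equiv> walk_deriv (spec_support A) (spec_weight A) x"
  assumes sym: "symmetric_mat A" and no_pole: "\<forall>c\<in>spec_support A. 1 - c * x \<noteq> 0"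
    and crit: "D = 0 \<or> (\<exists>\<mu>\<in>eigenvalues A. \<mu> * x = 1 \<and> x * D \<le> 0)"
  obtains v where "v \<in> sphere_S" "v \<bullet> (A *v v) = 0" "(norm v)\<^sup>2 = walk_sum A x"
proof -
  define y where "y = walk_vec A x"
  have y1: "ones \<bullet> y = walk_sum A x" unfolding y_def by (rule inner_ones_walk_vec[OF sym])
  have yAy: "y \<bullet> (A *v y) = D" unfolding y_def D_def by (rule walk_vec_form[OF sym])
  have yy: "y \<bullet> y = walk_sum A x + x * D"
    using inner_walk_vec_resolvent[OF sym no_pole, of y] y1 yAy unfolding y_def by simp
  obtain e \<mu> where e: "A *v e = \<mu> *\<^sub>R e" "ones \<bullet> e = 0" "y \<bullet> e = 0"
    and ee: "e \<bullet> e = - x * D" and eAe: "D + \<mu> * (e \<bullet> e) = 0"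
  proof (cases "D = 0")
    case True
    then show ?thesis using that[of 0 0] by simp
  next
    case False
    then obtain \<mu> where \<mu>: "\<mu> \<in> eigenvalues A" "\<mu> * x = 1" "x * D \<le> 0" using crit by blast
    moreover have "D + \<mu> * (- x * D) = 0" using \<mu>(2) by (simp add: algebra_simps)
    ultimately show ?thesis
      using that exists_eigenvector_orthogonal_walk_vec[OF sym no_pole \<mu>(1,2), of "- x * D"]
      unfolding y_def by (metis neg_0_le_iff_le mult_minus_left)
  qed
  define v where "v = y + e"
  have "e \<bullet> (A *v y) = 0"
    using symmetric_mat_inner[OF sym, of e y] e(1,3) by (simp add: inner_commute)
  then have "v \<bullet> (A *v v) = 0"
    using yAy e(1,3) eAe unfolding v_def
    by (simp add: matrix_vector_right_distrib inner_add_left inner_add_right inner_commute)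
  moreover have "v \<bullet> v = walk_sum A x"
    using yy ee e(3) unfolding v_def by (simp add: inner_add_left inner_add_right inner_commute)
  moreover have "ones \<bullet> v = walk_sum A x" using y1 e(2) unfolding v_def by (simp add: inner_add_right)
  ultimately show ?thesis
    using that[of v] unfolding sphere_S_def by (simp add: power2_norm_eq_inner)
qed

lemma walk_sum_attains_spherical_sup:
  assumes sym: "symmetric_mat A" and "\<And>i. A $ i $ i = 0" "A \<noteq> 0"
  obtains x where "x \<in> {1 / lambda_min A..1 / lambda_max A}" "\<forall>c\<in>spec_support A. 1 - c * x \<noteq> 0"
    "walk_sum A x = spherical_sup A"
proof -
  have m: "lambda_min A < 0" and M: "0 < lambda_max A"
    using lambda_min_neg lambda_max_pos assms by blast+
  have range: "\<forall>c\<in>spec_support A. lambda_min A \<le> c \<and> c \<le> lambda_max A"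
    using lambda_min_le_eigenvalue[OF sym] eigenvalue_le_lambda_max[OF sym]
    unfolding spec_support_def by blast
  have "\<forall>c\<in>spec_support A. 0 < spec_weight A c" using spec_support_pos by blast
  then obtain x where x: "x \<in> {1 / lambda_min A..1 / lambda_max A}"
      and no_pole: "\<forall>c\<in>spec_support A. 0 < 1 - c * x"
      and crit: "walk_deriv (spec_support A) (spec_weight A) x = 0 \<or>
        ((x = 1 / lambda_min A \<or> x = 1 / lambda_max A) \<and>
          x * walk_deriv (spec_support A) (spec_weight A) x \<le> 0)"
    using walk_deriv_root_or_endpoint[OF finite_spec_support[OF sym] _ range m M] by blast
  have no_pole': "\<forall>c\<in>spec_support A. 1 - c * x \<noteq> 0" using no_pole by fastforce
  have nonneg: "\<forall>c\<in>eigenvalues A. 0 \<le> 1 - c * x"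
    using one_minus_eigenvalue_mult_nonneg[OF sym m M x] by blast
  have "walk_deriv (spec_support A) (spec_weight A) x = 0 \<or>
      (\<exists>\<mu>\<in>eigenvalues A. \<mu> * x = 1 \<and> x * walk_deriv (spec_support A) (spec_weight A) x \<le> 0)"
    using crit m M lambda_min_in_eigenvalues[OF sym] lambda_max_in_eigenvalues[OF sym] by auto
  then obtain v where "v \<in> sphere_S" "v \<bullet> (A *v v) = 0" "(norm v)\<^sup>2 = walk_sum A x"
    using exists_null_sphere_vector[OF sym no_pole'] by blast
  then have "walk_sum A x \<le> spherical_sup A" using spherical_sup_upper by metis
  moreover have "spherical_sup A \<le> walk_sum A x"
    by (rule spherical_sup_le_walk_sum[OF sym nonneg no_pole'])
  ultimately show ?thesis using that x no_pole' by simp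
qed

lemma spherical_sup_le_walk_gen:
  assumes sym: "symmetric_mat A" and "\<And>i. A $ i $ i = 0" "A \<noteq> 0"
    and x: "x \<in> {1 / lambda_min A..1 / lambda_max A}"
  shows "ereal (spherical_sup A) \<le> walk_gen A x"
proof (cases "\<forall>c\<in>spec_support A. 1 - c * x \<noteq> 0")
  case True
  have "\<forall>c\<in>eigenvalues A. 0 \<le> 1 - c * x"
    using one_minus_eigenvalue_mult_nonneg[OF sym _ _ x] lambda_min_neg lambda_max_pos assms by blast
  then show ?thesis
    using spherical_sup_le_walk_sum[OF sym _ True] walk_gen_eq_walk_sum[OF True] by simp
qed (auto simp: walk_gen_pole)

lemma inner_min_eq_spherical_sup:
  assumes "symmetric_mat A" "\<And>i. A $ i $ i = 0"
  shows "inner_min A = ereal (spherical_sup A)"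
proof (cases "A = 0")
  case False
  obtain x where "x \<in> {1 / lambda_min A..1 / lambda_max A}" "walk_gen A x = ereal (spherical_sup A)"
    using walk_sum_attains_spherical_sup[OF assms False] walk_gen_eq_walk_sum by metis
  then have "(INF y\<in>{1 / lambda_min A..1 / lambda_max A}. walk_gen A y) = ereal (spherical_sup A)"
    using spherical_sup_le_walk_gen[OF assms False] by (intro antisym INF_greatest INF_lower2) auto
  with False show ?thesis unfolding inner_min_def by simp
qed (simp add: inner_min_def spherical_sup_zero)

section \<open>The Lovasz theta function\<close>

lemma weighted_adj_symmetric: "weighted_adj E A \<Longrightarrow> symmetric_mat A"
  unfolding weighted_adj_def by simp

lemma weighted_adj_diag: "weighted_adj E A \<Longrightarrow> A $ i $ i = 0"
  unfolding weighted_adj_def by simp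

definition theta_feasible :: "('n::finite \<Rightarrow> 'n \<Rightarrow> bool) \<Rightarrow> real^'n^'n \<Rightarrow> bool" where
  "theta_feasible E B \<longleftrightarrow> symmetric_mat B \<and> (\<forall>i j. (i = j \<or> \<not> E i j) \<longrightarrow> B $ i $ j = 1)"

lemma lovasz_theta_eq_Inf: "lovasz_theta E = Inf {lambda_max B | B. theta_feasible E B}"
  unfolding lovasz_theta_def theta_feasible_def ..

lemma one_le_lambda_max_if_feasible:
  fixes B :: "real^'n^'n"
  assumes "theta_feasible E B"
  shows "1 \<le> lambda_max B"
proof -
  fix i :: 'n
  have "symmetric_mat B" "B $ i $ i = 1" using assms unfolding theta_feasible_def by auto
  then show ?thesis
    using rayleigh_le_lambda_max[of B "axis i 1"]
    by (simp add: matrix_vector_mult_basis column_def inner_axis' inner_axis_axis)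
qed

lemma lovasz_theta_le_lambda_max: "theta_feasible E B \<Longrightarrow> lovasz_theta E \<le> lambda_max B"
  unfolding lovasz_theta_eq_Inf
  by (rule cInf_lower) (use one_le_lambda_max_if_feasible in \<open>auto simp: bdd_below_def\<close>)

definition ones_mat :: "real^'n^'n" where
  "ones_mat = (\<chi> i j. 1)"

lemma inner_ones_mat: "u \<bullet> (ones_mat *v u) = (ones \<bullet> u)\<^sup>2"
proof -
  have "ones_mat *v u = (ones \<bullet> u) *\<^sub>R ones"
    by (simp add: ones_mat_def ones_def matrix_vector_mult_def vec_eq_iff inner_vec_def)
  then show ?thesis by (simp add: power2_eq_square inner_commute)
qed

lemma theta_feasible_ones_mat: "theta_feasible E ones_mat"
  unfolding theta_feasible_def symmetric_mat_def ones_mat_def by (simp add: transpose_def vec_eq_iff)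

lemma lovasz_theta_le_card: "lovasz_theta E \<le> real CARD('n)" for E :: "'n::finite \<Rightarrow> 'n \<Rightarrow> bool"
proof -
  have "lambda_max (ones_mat :: real^'n^'n) \<le> real CARD('n)"
  proof (rule lambda_max_le_if_rayleigh_le)
    show "symmetric_mat (ones_mat :: real^'n^'n)"
      using theta_feasible_ones_mat unfolding theta_feasible_def by blast
    show "u \<bullet> (ones_mat *v u) \<le> real CARD('n) * (u \<bullet> u)" for u :: "real^'n"
      using Cauchy_Schwarz_ineq[of ones u] by (simp add: inner_ones_mat inner_ones_ones)
  qed
  then show ?thesis using lovasz_theta_le_lambda_max[OF theta_feasible_ones_mat, of E] by simp
qed

lemma lovasz_theta_le_walk_sum:
  assumes adj: "weighted_adj E A" and nonneg: "\<forall>c\<in>eigenvalues A. 0 \<le> 1 - c * x"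
    and no_pole: "\<forall>c\<in>spec_support A. 1 - c * x \<noteq> 0"
  shows "lovasz_theta E \<le> walk_sum A x"
proof -
  have sym: "symmetric_mat A" using adj by (rule weighted_adj_symmetric)
  define B where "B = ones_mat + (x * walk_sum A x) *\<^sub>R A"
  have "A $ i $ j = 0" if "i = j \<or> \<not> E i j" for i j
    using adj that unfolding weighted_adj_def by (cases "i = j") auto
  then have "theta_feasible E B"
    using symmetric_mat_entry[OF sym] unfolding theta_feasible_def symmetric_mat_def B_def ones_mat_def
    by (auto simp: transpose_def vec_eq_iff)
  moreover have "lambda_max B \<le> walk_sum A x"
  proof (rule lambda_max_le_if_rayleigh_le)
    show "symmetric_mat B" using \<open>theta_feasible E B\<close> unfolding theta_feasible_def by simp
    fix u
    have "u \<bullet> (B *v u) = (ones \<bullet> u)\<^sup>2 + x * walk_sum A x * (u \<bullet> (A *v u))"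
      unfolding B_def
      by (simp add: matrix_vector_mult_add_rdistrib inner_add_right inner_ones_mat scaleR_matrix_vector_assoc[symmetric])
    also have "\<dots> \<le> walk_sum A x * (u \<bullet> u)"
      using walk_sum_cauchy_schwarz[OF sym nonneg no_pole, of u] by (simp add: algebra_simps)
    finally show "u \<bullet> (B *v u) \<le> walk_sum A x * (u \<bullet> u)" .
  qed
  ultimately show ?thesis using lovasz_theta_le_lambda_max by fastforce
qed

lemma lovasz_theta_le_spherical_sup:
  fixes A :: "real^'n^'n"
  assumes "weighted_adj E A"
  shows "lovasz_theta E \<le> spherical_sup A"
proof (cases "A = 0")
  case True
  then show ?thesis using lovasz_theta_le_card[of E] spherical_sup_zero[where 'n = 'n] by simp
next
  case False
  have sym: "symmetric_mat A" and diag: "\<And>i. A $ i $ i = 0"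
    using assms by (simp_all add: weighted_adj_symmetric weighted_adj_diag)
  obtain x where x: "x \<in> {1 / lambda_min A..1 / lambda_max A}"
    and no_pole: "\<forall>c\<in>spec_support A. 1 - c * x \<noteq> 0" and "walk_sum A x = spherical_sup A"
    using walk_sum_attains_spherical_sup[OF sym diag False] by blast
  moreover have "\<forall>c\<in>eigenvalues A. 0 \<le> 1 - c * x"
    using one_minus_eigenvalue_mult_nonneg[OF sym _ _ x] lambda_min_neg lambda_max_pos sym diag False
    by blast
  ultimately show ?thesis using lovasz_theta_le_walk_sum[OF assms] by metis
qed

lemma weighted_adj_sub_ones_mat: "theta_feasible E B \<Longrightarrow> weighted_adj E (B - ones_mat)"
  unfolding theta_feasible_def weighted_adj_def symmetric_mat_def ones_mat_def
  by (auto simp: transpose_def vec_eq_iff)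

lemma spherical_sup_le_lambda_max:
  fixes B :: "real^'n^'n"
  assumes "theta_feasible E B"
  shows "spherical_sup (B - ones_mat) \<le> lambda_max B"
proof (rule spherical_sup_least)
  fix v :: "real^'n" assume v: "v \<in> sphere_S" "v \<bullet> ((B - ones_mat) *v v) = 0"
  have "ones \<bullet> v = v \<bullet> v" using v(1) unfolding sphere_S_def by (simp add: power2_norm_eq_inner)
  then have "(v \<bullet> v) * (v \<bullet> v) = v \<bullet> (B *v v)"
    using v(2) by (simp add: matrix_vector_mult_diff_rdistrib inner_diff_right inner_ones_mat power2_eq_square)
  also have "\<dots> \<le> lambda_max B * (v \<bullet> v)"
    using assms unfolding theta_feasible_def by (simp add: rayleigh_le_lambda_max)
  finally have "v \<bullet> v \<le> lambda_max B"
    using one_le_lambda_max_if_feasible[OF assms]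
    by (metis inner_ge_zero mult_right_le_imp_le order_le_less order_trans zero_le_one)
  then show "(norm v)\<^sup>2 \<le> lambda_max B" by (simp add: power2_norm_eq_inner)
qed

lemma spherical_indep_eq_Inf: "spherical_indep E = Inf (spherical_sup ` {A. weighted_adj E A})"
  unfolding spherical_indep_def spherical_sup_def[symmetric] by (simp add: setcompr_eq_image)

lemma spherical_sup_image_nonempty: "spherical_sup ` {A. weighted_adj E A} \<noteq> {}"
  using weighted_adj_sub_ones_mat[OF theta_feasible_ones_mat] by blast

lemma bdd_below_spherical_sup_image: "bdd_below (spherical_sup ` {A. weighted_adj E A})"
  using lovasz_theta_le_spherical_sup unfolding bdd_below_def by blast

lemma lovasz_theta_le_spherical_indep: "lovasz_theta E \<le> spherical_indep E"
  unfolding spherical_indep_eq_Inf using spherical_sup_image_nonempty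
  by (rule cInf_greatest) (auto intro: lovasz_theta_le_spherical_sup)

lemma spherical_indep_le_lovasz_theta: "spherical_indep E \<le> lovasz_theta E"
  unfolding lovasz_theta_eq_Inf
proof (rule cInf_greatest)
  show "{lambda_max B | B. theta_feasible E B} \<noteq> {}" using theta_feasible_ones_mat by blast
  fix t assume "t \<in> {lambda_max B | B. theta_feasible E B}"
  then obtain B where B: "theta_feasible E B" "t = lambda_max B" by blast
  have "spherical_indep E \<le> spherical_sup (B - ones_mat)"
    unfolding spherical_indep_eq_Inf using weighted_adj_sub_ones_mat[OF B(1)]
    by (intro cInf_lower bdd_below_spherical_sup_image) simp
  also have "\<dots> \<le> t" using spherical_sup_le_lambda_max[OF B(1)] B(2) by simp
  finally show "spherical_indep E \<le> t" .
qed

theorem theorem1: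
  fixes E :: "'n::finite \<Rightarrow> 'n \<Rightarrow> bool"
  assumes "\<And>i j. E i j \<Longrightarrow> E j i"
    and "\<And>i. \<not> E i i"
  shows "lovasz_theta E = spherical_indep E
    \<and> ereal (spherical_indep E) = (INF A\<in>{A. weighted_adj E A}. inner_min A)
    \<and> (\<forall>A. weighted_adj E A \<and> A \<noteq> 0 \<longrightarrow>
          (\<exists>x\<in>{1 / lambda_min A .. 1 / lambda_max A}. walk_gen A x = inner_min A))"
proof (intro conjI allI impI)
  show "lovasz_theta E = spherical_indep E"
    using lovasz_theta_le_spherical_indep spherical_indep_le_lovasz_theta by (rule antisym)
  have inner_min: "inner_min A = ereal (spherical_sup A)" if "weighted_adj E A" for A
    using that by (simp add: inner_min_eq_spherical_sup weighted_adj_symmetric weighted_adj_diag)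
  then show "ereal (spherical_indep E) = (INF A\<in>{A. weighted_adj E A}. inner_min A)"
    unfolding spherical_indep_eq_Inf
    using ereal_Inf'[OF bdd_below_spherical_sup_image spherical_sup_image_nonempty]
    by (simp add: image_comp)
  fix A assume A: "weighted_adj E A \<and> A \<noteq> 0"
  then obtain x where "x \<in> {1 / lambda_min A..1 / lambda_max A}" "walk_gen A x = ereal (spherical_sup A)"
    using walk_sum_attains_spherical_sup[of A] walk_gen_eq_walk_sum
    by (metis weighted_adj_symmetric weighted_adj_diag)
  then show "\<exists>x\<in>{1 / lambda_min A .. 1 / lambda_max A}. walk_gen A x = inner_min A"
    using inner_min A by auto
qed

end
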